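(* Fix $n\ge 3$, and assume that for all positive integers $w_1,\ldots,w_{n-1}$ one has either $\mathrm{ML}(w_1,\ldots,w_{n-1})=\frac{s}{(n-1)s+1}$ for some $s\in\mathbb{N}$ or $\mathrm{ML}(w_1,\ldots,w_{n-1})\ge\frac{1}{n-1}$. Let $v_1<\cdots<v_{n-1}$ be positive integers with $\mathrm{ML}(v_1,\ldots,v_{n-1})=L>\frac1n$. Then $\mathrm{ML}(v_1,\ldots,v_n)\ge\frac1n$ for every positive integer $v_n$ with $v_n\ge(2n-1)v_{n-1}$.
   Context: For a real number $x$, $\Vert x\Vert$ denotes the distance from $x$ to the nearest integer. For positive integers $v_1,\ldots,v_k$, the maximum loneliness is $\mathrm{ML}(v_1,\ldots,v_k)=\max_{t\in\mathbb{R}}\min_{1\le i\le k}\Vert t v_i\Vert$. Here $\mathbb{N}=\{1,2,3,\ldots\}$. *)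

theory Defs
  imports Complex_Main
begin

definition nint_dist :: "real \<Rightarrow> real" where
  "nint_dist x = \<bar>x - real_of_int (round x)\<bar>"

text \<open>Maximum loneliness of v 1, ..., v k (the maximum is attained, so it equals the supremum).\<close>
definition max_loneliness :: "nat \<Rightarrow> (nat \<Rightarrow> nat) \<Rightarrow> real" where
  "max_loneliness k v = (SUP t::real. Min ((\<lambda>i. nint_dist (t * real (v i))) ` {1..k}))"

end

theory Submission
  imports Defs
begin

text \<open>The values \<open>s/((n-1)s+1)\<close> exceed \<open>1/n\<close> only for \<open>s \<ge> 2\<close>, so the hypothesis on
  \<open>n - 1\<close> speeds and \<open>L > 1/n\<close> force \<open>L \<ge> 2/(2n-1)\<close>, leaving a slack \<open>L - 1/n \<ge> 1/(n(2n-1))\<close>.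
  Start at an almost optimal time \<open>t\<^sub>0\<close> for \<open>v\<^sub>1, \<dots>, v\<^sub>n\<^sub>-\<^sub>1\<close>. Moving \<open>t\<close> by at most
  \<open>h = (L - 1/n)/v\<^sub>n\<^sub>-\<^sub>1\<close> keeps all of them at distance \<open>\<ge> 1/n\<close> from the integers, while
  \<open>t v\<^sub>n\<close> sweeps an interval of length \<open>2 h v\<^sub>n \<ge> 2/n\<close>, which must contain a point at
  distance \<open>\<ge> 1/n\<close> from the integers.\<close>

lemma nint_dist_le: "nint_dist x \<le> \<bar>x - of_int m\<bar>"
  unfolding nint_dist_def by (rule round_diff_minimal)

lemma nint_dist_nonneg: "0 \<le> nint_dist x"
  unfolding nint_dist_def by simp

lemma nint_dist_le_half: "nint_dist x \<le> 1/2"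
  unfolding nint_dist_def using of_int_round_ge[of x] of_int_round_le[of x] by linarith

lemma nint_dist_lipschitz: "nint_dist x \<le> nint_dist y + \<bar>x - y\<bar>"
proof -
  have "nint_dist x \<le> \<bar>x - of_int (round y)\<bar>" by (rule nint_dist_le)
  also have "\<dots> \<le> nint_dist y + \<bar>x - y\<bar>" unfolding nint_dist_def by linarith
  finally show ?thesis .
qed

lemma nint_dist_of_int_add:
  assumes "0 \<le> c" "c \<le> 1/2"
  shows "nint_dist (of_int k + c) = c"
proof -
  let ?r = "round (of_int k + c)"
  have "?r \<le> k \<or> k + 1 \<le> ?r" by linarith
  then consider "real_of_int ?r \<le> of_int k" | "of_int k + 1 \<le> real_of_int ?r"
    by (metis of_int_1 of_int_add of_int_le_iff)
  then have "c \<le> \<bar>of_int k + c - of_int ?r\<bar>"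
    by cases (use assms in linarith)+
  then have "c \<le> nint_dist (of_int k + c)" unfolding nint_dist_def .
  moreover have "nint_dist (of_int k + c) \<le> c"
    using nint_dist_le[of "of_int k + c" k] assms by simp
  ultimately show ?thesis by linarith
qed

lemma interval_contains_far_from_integers:
  assumes "c \<le> 1/2" "2 * c \<le> l" "0 \<le> l"
  shows "\<exists>x. a \<le> x \<and> x \<le> a + l \<and> c \<le> nint_dist x"
proof (cases "c \<le> nint_dist a")
  case True
  with assms show ?thesis by (intro exI[of _ a]) auto
next
  case False
  then have "0 < c" using nint_dist_nonneg[of a] by linarith
  moreover have "\<bar>a - of_int (round a)\<bar> < c" using False unfolding nint_dist_def by simp
  ultimately show ?thesis
    using assms nint_dist_of_int_add[of c "round a"] by (intro exI[of _ "of_int (round a) + c"]) auto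
qed

lemma bdd_above_loneliness:
  fixes k :: nat and v :: "nat \<Rightarrow> nat"
  assumes "1 \<le> k"
  shows "bdd_above (range (\<lambda>t. Min ((\<lambda>i. nint_dist (t * real (v i))) ` {1..k})))"
proof (rule bdd_aboveI2)
  fix t
  have "Min ((\<lambda>i. nint_dist (t * real (v i))) ` {1..k}) \<le> nint_dist (t * real (v 1))"
    using assms by (intro Min_le) auto
  also have "\<dots> \<le> 1/2" by (rule nint_dist_le_half)
  finally show "Min ((\<lambda>i. nint_dist (t * real (v i))) ` {1..k}) \<le> 1/2" .
qed

lemma max_loneliness_ge:
  fixes v :: "nat \<Rightarrow> nat"
  assumes "1 \<le> k" "\<forall>i\<in>{1..k}. c \<le> nint_dist (t * real (v i))"
  shows "c \<le> max_loneliness k v"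
proof -
  have "c \<le> Min ((\<lambda>i. nint_dist (t * real (v i))) ` {1..k})"
    using assms by (subst Min_ge_iff) auto
  also have "\<dots> \<le> max_loneliness k v"
    unfolding max_loneliness_def by (rule cSUP_upper[OF UNIV_I bdd_above_loneliness[OF assms(1)]])
  finally show ?thesis .
qed

lemma less_max_loneliness_imp:
  fixes v :: "nat \<Rightarrow> nat"
  assumes "1 \<le> k" "x < max_loneliness k v"
  shows "\<exists>t. \<forall>i\<in>{1..k}. x < nint_dist (t * real (v i))"
proof -
  obtain t where "x < Min ((\<lambda>i. nint_dist (t * real (v i))) ` {1..k})"
    using assms less_cSUP_iff[OF _ bdd_above_loneliness[OF assms(1)]]
    unfolding max_loneliness_def by auto
  then show ?thesis using assms(1) by (subst (asm) Min_gr_iff) auto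
qed

lemma lonely_time_extend:
  fixes v :: "nat \<Rightarrow> nat"
  assumes far: "\<forall>i\<in>{1..k}. c + d \<le> nint_dist (t\<^sub>0 * real (v i))"
    and bound: "\<forall>i\<in>{1..k}. real (v i) \<le> V" and "0 < V" "0 \<le> d"
    and "c \<le> 1/2" and window: "c * V \<le> d * real (v (Suc k))" and "0 < v (Suc k)"
  shows "\<exists>t. \<forall>i\<in>{1..Suc k}. c \<le> nint_dist (t * real (v i))"
proof -
  define h where "h = d / V"
  define u where "u = real (v (Suc k))"
  have "0 \<le> h" "0 < u" using assms unfolding h_def u_def by auto
  have "c \<le> h * u" using window \<open>0 < V\<close> unfolding h_def u_def by (simp add: field_simps)
  then obtain x where x: "(t\<^sub>0 - h) * u \<le> x" "x \<le> (t\<^sub>0 - h) * u + 2 * h * u" "c \<le> nint_dist x"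
    using interval_contains_far_from_integers[OF \<open>c \<le> 1/2\<close>, of "2 * h * u" "(t\<^sub>0 - h) * u"]
      \<open>0 \<le> h\<close> \<open>0 < u\<close> by auto
  define t where "t = x / u"
  have "t\<^sub>0 - h \<le> t" "t \<le> t\<^sub>0 + h" using x \<open>0 < u\<close> unfolding t_def by (simp_all add: field_simps)
  then have "\<bar>t\<^sub>0 - t\<bar> \<le> h" by linarith
  have "c \<le> nint_dist (t * real (v i))" if i: "i \<in> {1..k}" for i
  proof -
    have "\<bar>t\<^sub>0 * real (v i) - t * real (v i)\<bar> = \<bar>t\<^sub>0 - t\<bar> * real (v i)"
      by (simp flip: left_diff_distrib add: abs_mult)
    also have "\<dots> \<le> h * V" using \<open>\<bar>t\<^sub>0 - t\<bar> \<le> h\<close> bound i \<open>0 \<le> h\<close> by (intro mult_mono) auto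
    also have "\<dots> = d" using \<open>0 < V\<close> unfolding h_def by simp
    finally have "\<bar>t\<^sub>0 * real (v i) - t * real (v i)\<bar> \<le> d" .
    moreover have "c + d \<le> nint_dist (t\<^sub>0 * real (v i))" using far i by blast
    ultimately show ?thesis
      using nint_dist_lipschitz[of "t\<^sub>0 * real (v i)" "t * real (v i)"] by linarith
  qed
  moreover have "c \<le> nint_dist (t * real (v (Suc k)))"
    using x \<open>0 < u\<close> unfolding t_def u_def by simp
  ultimately show ?thesis by (auto simp: atLeastAtMostSuc_conv)
qed

lemma max_loneliness_Suc_ge:
  fixes v :: "nat \<Rightarrow> nat"
  assumes "1 \<le> k" and "\<forall>i\<in>{1..k}. real (v i) \<le> V" "0 < V"
    and "c \<le> 1/2" "c < max_loneliness k v"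
    and "c * V \<le> (max_loneliness k v - c) * real (v (Suc k))" "0 < v (Suc k)"
  shows "c \<le> max_loneliness (Suc k) v"
proof (rule dense_le)
  fix c' assume "c' < c"
  define d where "d = max_loneliness k v - c"
  have "0 < d" using assms(5) unfolding d_def by simp
  obtain t\<^sub>0 where "\<forall>i\<in>{1..k}. c' + d < nint_dist (t\<^sub>0 * real (v i))"
    using less_max_loneliness_imp[of k "c' + d" v] \<open>1 \<le> k\<close> \<open>c' < c\<close> unfolding d_def by auto
  then have far: "\<forall>i\<in>{1..k}. c' + d \<le> nint_dist (t\<^sub>0 * real (v i))" by (simp add: less_imp_le)
  have window: "c' * V \<le> d * real (v (Suc k))"
  proof -
    have "c' * V \<le> c * V" using \<open>c' < c\<close> \<open>0 < V\<close> by simp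
    then show ?thesis using assms(6) unfolding d_def by linarith
  qed
  have "c' \<le> 1/2" using assms(4) \<open>c' < c\<close> by linarith
  obtain t where "\<forall>i\<in>{1..Suc k}. c' \<le> nint_dist (t * real (v i))"
    using lonely_time_extend[OF far assms(2,3) less_imp_le[OF \<open>0 < d\<close>] \<open>c' \<le> 1/2\<close> window assms(7)]
    by blast
  then show "c' \<le> max_loneliness (Suc k) v" by (rule max_loneliness_ge[rotated]) simp
qed

lemma loneliness_dichotomy_slack:
  fixes n :: nat and L :: real
  assumes "2 \<le> n" "1 / real n < L"
    and "(\<exists>s::nat. s \<ge> 1 \<and> L = real s / (real (n-1) * real s + 1)) \<or> 1 / real (n-1) \<le> L"
  shows "1 / (real n * (2 * real n - 1)) \<le> L - 1 / real n"
proof -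
  have n: "real (n - 1) = real n - 1" "2 \<le> real n" using assms(1) by auto
  from assms(3) have "2 / (2 * real n - 1) \<le> L"
  proof
    assume "\<exists>s::nat. s \<ge> 1 \<and> L = real s / (real (n-1) * real s + 1)"
    then obtain s :: nat where Ls: "L = real s / ((real n - 1) * real s + 1)" using n(1) by auto
    have "0 \<le> (real n - 1) * real s" using n(2) by simp
    then have pos: "0 < (real n - 1) * real s + 1" by linarith
    then have "(real n - 1) * real s + 1 < real s * real n"
      using assms(2) n(2) unfolding Ls by (simp add: field_simps)
    then have "2 \<le> real s" by (simp add: algebra_simps)
    then show ?thesis using n(2) pos unfolding Ls by (simp add: field_simps)
  next
    assume "1 / real (n-1) \<le> L"
    moreover have "2 / (2 * real n - 1) \<le> 1 / (real n - 1)" using n(2) by (simp add: field_simps)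
    ultimately show ?thesis unfolding n(1) by linarith
  qed
  moreover have "2 / (2 * real n - 1) - 1 / real n = 1 / (real n * (2 * real n - 1))"
    using n(2) by (simp add: field_simps)
  ultimately show ?thesis by linarith
qed

lemma strict_mono_on_interval_le:
  assumes "\<forall>i. 1 \<le> i \<and> i < m \<longrightarrow> v i < v (Suc i)" "1 \<le> i" "i \<le> j" "j \<le> m"
  shows "v i \<le> (v j :: nat)"
  using assms(3,4)
proof (induction j rule: dec_induct)
  case (step j)
  then have "v j < v (Suc j)" using assms(1,2) by simp
  then show ?case using step by simp
qed simp

theorem lemma8p5:
  fixes n :: nat and v :: "nat \<Rightarrow> nat" and L :: real
  assumes "n \<ge> 3"
    and "\<forall>w :: nat \<Rightarrow> nat. (\<forall>i\<in>{1..n-1}. w i > 0) \<longrightarrow>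
           (\<exists>s::nat. s \<ge> 1 \<and> max_loneliness (n-1) w = real s / (real (n-1) * real s + 1))
           \<or> max_loneliness (n-1) w \<ge> 1 / real (n-1)"
    and "\<forall>i\<in>{1..n-1}. v i > 0"
    and "\<forall>i. 1 \<le> i \<and> i < n-1 \<longrightarrow> v i < v (Suc i)"
    and "max_loneliness (n-1) v = L"
    and "L > 1 / real n"
    and "v n > 0"
    and "v n \<ge> (2*n-1) * v (n-1)"
  shows "max_loneliness n v \<ge> 1 / real n"
proof -
  have n: "3 \<le> real n" "Suc (n - 1) = n" "2 \<le> n" using assms(1) by auto
  have "(\<exists>s::nat. s \<ge> 1 \<and> L = real s / (real (n-1) * real s + 1)) \<or> 1 / real (n-1) \<le> L"
    using assms(2,3) unfolding assms(5)[symmetric] by blast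
  with n(3) assms(6) have slack: "1 / (real n * (2 * real n - 1)) \<le> L - 1 / real n"
    by (rule loneliness_dichotomy_slack)
  define V where "V = real (v (n - 1))"
  have "real ((2 * n - 1) * v (n - 1)) \<le> real (v n)" using assms(8) by linarith
  then have vn: "(2 * real n - 1) * V \<le> real (v n)" using assms(1) by (simp add: V_def of_nat_diff)
  have "1 / real n * V = 1 / (real n * (2 * real n - 1)) * ((2 * real n - 1) * V)"
    using n(1) by (simp add: field_simps)
  also have "\<dots> \<le> (L - 1 / real n) * real (v n)"
  proof (rule mult_mono[OF slack vn])
    show "0 \<le> L - 1 / real n" using assms(6) by linarith
    show "0 \<le> (2 * real n - 1) * V" using n(1) unfolding V_def by simp
  qed
  finally have window: "1 / real n * V \<le> (L - 1 / real n) * real (v (Suc (n - 1)))"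
    by (simp only: n(2))
  have "\<forall>i\<in>{1..n-1}. real (v i) \<le> V"
    using strict_mono_on_interval_le[OF assms(4)] unfolding V_def by simp
  moreover have "0 < V" using assms(1,3) unfolding V_def by simp
  moreover have "1 / real n \<le> 1/2" using n(1) by simp
  moreover have "1 \<le> n - 1" "0 < v (Suc (n - 1))" using assms(1,7) n(2) by simp_all
  ultimately have "1 / real n \<le> max_loneliness (Suc (n - 1)) v"
    using max_loneliness_Suc_ge[of "n - 1" v V "1 / real n", unfolded assms(5)] window assms(6)
    by blast
  then show ?thesis by (simp only: n(2))
qed

end
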